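(* Let $f,g\colon M^n\to\mathbb{R}^N$ be immersions with $g_*=f_*\circ e^{\varphi}T$, where $\varphi\in C^\infty(M)$ and $T$ is a $(1,1)$-tensor orthogonal with respect to the metric $\langle\,,\rangle$ induced by $f$. Extend $T$, $\langle\,,\rangle$ and the second fundamental form $\alpha_f$ of $f$ complex (bi)linearly to $TM\otimes\mathbb{C}$, and for an eigenvalue $\lambda$ of $T$ let $E_\lambda=\ker(T-\lambda I)\subset TM\otimes\mathbb{C}$. Then for eigenvalues $\lambda,\mu$: (i) $\langle E_\lambda,E_\mu\rangle=0$ unless $\mu=\bar\lambda=1/\lambda$; (ii) $\alpha_f(E_\lambda,E_\mu)=0$ unless $\mu=\lambda$. *)

theory Defs
  imports "HOL-Analysis.Analysis"
begin

text \<open>Local (coordinate) model: the manifold M^n is an open set U in real^'n.\<close>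

abbreviation Dif :: "('a::real_normed_vector \<Rightarrow> 'b::real_normed_vector) \<Rightarrow> 'a \<Rightarrow> 'a \<Rightarrow> 'b" where
  "Dif f x \<equiv> frechet_derivative f (at x)"

fun iter_dd :: "('a::real_normed_vector \<Rightarrow> 'b::real_normed_vector) \<Rightarrow> 'a list \<Rightarrow> 'a \<Rightarrow> 'b" where
  "iter_dd f [] = f"
| "iter_dd f (v # vs) = (\<lambda>x. Dif (iter_dd f vs) x v)"

definition smooth_on :: "'a::real_normed_vector set \<Rightarrow> ('a \<Rightarrow> 'b::real_normed_vector) \<Rightarrow> bool" where
  "smooth_on U f \<longleftrightarrow> (\<forall>vs. \<forall>x\<in>U. iter_dd f vs differentiable (at x))"

definition immersion_on :: "(real^'n \<Rightarrow> real^'m) \<Rightarrow> (real^'n) set \<Rightarrow> bool" where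
  "immersion_on f U \<longleftrightarrow> open U \<and> smooth_on U f \<and> (\<forall>x\<in>U. inj (Dif f x))"

definition metric :: "(real^'n \<Rightarrow> real^'m) \<Rightarrow> real^'n \<Rightarrow> real^'n \<Rightarrow> real^'n \<Rightarrow> real" where
  "metric f x u v = Dif f x u \<bullet> Dif f x v"

definition D2 :: "(real^'n \<Rightarrow> real^'m) \<Rightarrow> real^'n \<Rightarrow> real^'n \<Rightarrow> real^'n \<Rightarrow> real^'m" where
  "D2 f x u v = Dif (\<lambda>y. Dif f y v) x u"

definition nproj :: "(real^'m) set \<Rightarrow> real^'m \<Rightarrow> real^'m" where
  "nproj S w = w - (THE p. p \<in> S \<and> (\<forall>s\<in>S. (w - p) \<bullet> s = 0))"

definition sff :: "(real^'n \<Rightarrow> real^'m) \<Rightarrow> real^'n \<Rightarrow> real^'n \<Rightarrow> real^'n \<Rightarrow> real^'m" where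
  "sff f x u v = nproj (range (Dif f x)) (D2 f x u v)"

definition cmetric :: "(real^'n \<Rightarrow> real^'m) \<Rightarrow> real^'n \<Rightarrow> complex^'n \<Rightarrow> complex^'n \<Rightarrow> complex" where
  "cmetric f x v w = (\<Sum>i\<in>UNIV. \<Sum>j\<in>UNIV. v$i * w$j * complex_of_real (metric f x (axis i 1) (axis j 1)))"

definition csff :: "(real^'n \<Rightarrow> real^'m) \<Rightarrow> real^'n \<Rightarrow> complex^'n \<Rightarrow> complex^'n \<Rightarrow> complex^'m" where
  "csff f x v w = (\<chi> k. \<Sum>i\<in>UNIV. \<Sum>j\<in>UNIV. v$i * w$j * complex_of_real (sff f x (axis i 1) (axis j 1) $ k))"

definition cmat :: "real^'n^'n \<Rightarrow> complex^'n^'n" where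
  "cmat A = (\<chi> i j. complex_of_real (A$i$j))"

definition eigenspace_c :: "real^'n^'n \<Rightarrow> complex \<Rightarrow> (complex^'n) set" where
  "eigenspace_c A l = {v. cmat A *v v = (\<chi> i. l * v$i)}"

end

theory Submission
  imports Defs
begin

text \<open>Since \<open>T\<close> is an isometry of the induced metric, \<open>\<langle>v, w\<rangle> = \<lambda>\<mu>\<langle>v, w\<rangle>\<close> for
  eigenvectors \<open>v, w\<close> with eigenvalues \<open>\<lambda>, \<mu>\<close>. The conjugate of an eigenvector for \<open>\<lambda>\<close> is an
  eigenvector for \<open>cnj \<lambda>\<close>, and pairing \<open>v\<close> with its conjugate gives a positive number, so
  \<open>\<lambda> cnj \<lambda> = 1\<close>; this yields (i). For (ii), differentiate \<open>g\<^sub>* = e\<^sup>\<phi> f\<^sub>* T\<close>: the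
  terms in which \<open>e\<^sup>\<phi> T\<close> is differentiated are tangent to \<open>f\<close>, so the normal part of the
  symmetric second derivative of \<open>g\<close> is \<open>e\<^sup>\<phi> \<alpha>\<^sub>f(X, TY)\<close>. Thus \<open>T\<close> is self-adjoint for
  every normal component of \<open>\<alpha>\<^sub>f\<close>, and eigenvectors of a self-adjoint map for distinct
  eigenvalues are orthogonal.\<close>

lemma linear_vec_expand:
  fixes L :: "real^'n \<Rightarrow> 'b::real_vector"
  assumes "linear L"
  shows "L x = (\<Sum>i\<in>UNIV. x$i *\<^sub>R L (axis i 1))"
proof -
  have "x = (\<Sum>i\<in>UNIV. x$i *\<^sub>R axis i 1)"
    using basis_expansion[of x] by (simp add: scalar_mult_eq_scaleR)
  then have "L x = L (\<Sum>i\<in>UNIV. x$i *\<^sub>R axis i 1)" by simp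
  also have "\<dots> = (\<Sum>i\<in>UNIV. x$i *\<^sub>R L (axis i 1))"
    by (simp add: linear_sum[OF assms] linear_scale[OF assms])
  finally show ?thesis .
qed

lemma bilinear_vec_expand:
  fixes b :: "real^'n \<Rightarrow> real^'n \<Rightarrow> real"
  assumes "bilinear b"
  shows "b x y = (\<Sum>i\<in>UNIV. \<Sum>j\<in>UNIV. x$i * y$j * b (axis i 1) (axis j 1))"
proof -
  have l: "linear (\<lambda>x. b x y)" and r: "\<And>z. linear (b z)"
    using assms by (simp_all add: bilinear_def)
  have "b x y = (\<Sum>i\<in>UNIV. x$i * b (axis i 1) y)"
    using linear_vec_expand[OF l, of x] by simp
  also have "\<dots> = (\<Sum>i\<in>UNIV. x$i * (\<Sum>j\<in>UNIV. y$j * b (axis i 1) (axis j 1)))"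
    using linear_vec_expand[OF r, of _ y] by simp
  finally show ?thesis by (simp add: sum_distrib_left mult.assoc)
qed

lemma sum_swap_nested2:
  "(\<Sum>i\<in>I. \<Sum>j\<in>J. \<Sum>a\<in>K. \<Sum>c\<in>L. F i j a c) = (\<Sum>a\<in>K. \<Sum>c\<in>L. \<Sum>i\<in>I. \<Sum>j\<in>J. F i j a c)"
proof -
  have "(\<Sum>i\<in>I. \<Sum>j\<in>J. \<Sum>a\<in>K. \<Sum>c\<in>L. F i j a c) = (\<Sum>a\<in>K. \<Sum>i\<in>I. \<Sum>j\<in>J. \<Sum>c\<in>L. F i j a c)"
    by (subst sum.swap) (rule sum.cong[OF refl], rule sum.swap)
  also have "\<dots> = (\<Sum>a\<in>K. \<Sum>c\<in>L. \<Sum>i\<in>I. \<Sum>j\<in>J. F i j a c)"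
    by (rule sum.cong[OF refl], subst sum.swap) (rule sum.cong[OF refl], rule sum.swap)
  finally show ?thesis .
qed

definition cform :: "(real^'n \<Rightarrow> real^'n \<Rightarrow> real) \<Rightarrow> complex^'n \<Rightarrow> complex^'n \<Rightarrow> complex" where
  "cform b v w = (\<Sum>i\<in>UNIV. \<Sum>j\<in>UNIV. v$i * w$j * complex_of_real (b (axis i 1) (axis j 1)))"

lemma cform_cmat_mult:
  assumes "bilinear b"
  shows "cform b (cmat A *v v) (cmat C *v w) = cform (\<lambda>u z. b (A *v u) (C *v z)) v w"
proof -
  have e: "b (A *v axis a 1) (C *v axis c 1) =
      (\<Sum>i\<in>UNIV. \<Sum>j\<in>UNIV. A$i$a * C$j$c * b (axis i 1) (axis j 1))" for a c
    using bilinear_vec_expand[OF assms, of "A *v axis a 1" "C *v axis c 1"]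
    by (simp add: matrix_vector_mult_basis column_def)
  have "cform b (cmat A *v v) (cmat C *v w) =
    (\<Sum>i\<in>UNIV. \<Sum>j\<in>UNIV. \<Sum>a\<in>UNIV. \<Sum>c\<in>UNIV.
       v$a * w$c * complex_of_real (A$i$a * C$j$c * b (axis i 1) (axis j 1)))"
    by (simp add: cform_def cmat_def matrix_vector_mult_def sum_distrib_left sum_distrib_right mult_ac)
      (rule sum.cong[OF refl], rule sum.cong[OF refl], rule sum.swap)
  also have "\<dots> = (\<Sum>a\<in>UNIV. \<Sum>c\<in>UNIV. \<Sum>i\<in>UNIV. \<Sum>j\<in>UNIV.
       v$a * w$c * complex_of_real (A$i$a * C$j$c * b (axis i 1) (axis j 1)))"
    by (rule sum_swap_nested2)
  also have "\<dots> = cform (\<lambda>u z. b (A *v u) (C *v z)) v w"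
    by (simp add: cform_def e sum_distrib_left mult_ac)
  finally show ?thesis .
qed

lemma cmat_mat_1: "cmat (mat 1) = mat 1"
  by (simp add: cmat_def mat_def vec_eq_iff)

lemma cform_scale_left: "cform b (\<chi> i. c * v$i) w = c * cform b v w"
  unfolding cform_def by (simp add: sum_distrib_left mult_ac)

lemma cform_scale_right: "cform b v (\<chi> i. c * w$i) = c * cform b v w"
  unfolding cform_def by (simp add: sum_distrib_left mult_ac)

lemma cform_eigenvectors_self_adjoint:
  assumes "bilinear b" "\<And>u w. b u (A *v w) = b (A *v u) w"
    and "v \<in> eigenspace_c A l" "w \<in> eigenspace_c A m" "m \<noteq> l"
  shows "cform b v w = 0"
proof -
  have "cform b (cmat (mat 1) *v v) (cmat A *v w) = cform b (cmat A *v v) (cmat (mat 1) *v w)"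
    by (simp add: cform_cmat_mult[OF assms(1)] assms(2))
  then have "m * cform b v w = l * cform b v w"
    using assms(3,4) by (simp add: cmat_mat_1 eigenspace_c_def cform_scale_left cform_scale_right)
  then show ?thesis using assms(5) by simp
qed

lemma cform_eigenvectors_isometry:
  assumes "bilinear b" "\<And>u w. b (A *v u) (A *v w) = b u w"
    and "v \<in> eigenspace_c A l" "w \<in> eigenspace_c A m"
  shows "l * m * cform b v w = cform b v w"
proof -
  have "cform b (cmat A *v v) (cmat A *v w) = cform b (cmat (mat 1) *v v) (cmat (mat 1) *v w)"
    by (simp add: cform_cmat_mult[OF assms(1)] assms(2))
  then show ?thesis
    using assms(3,4)
    by (simp add: cmat_mat_1 eigenspace_c_def cform_scale_left cform_scale_right mult.commute)
qed

lemma eigenspace_c_cnj: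
  assumes "v \<in> eigenspace_c A l"
  shows "(\<chi> i. cnj (v$i)) \<in> eigenspace_c A (cnj l)"
proof -
  have "cnj ((cmat A *v v) $ i) = cnj l * cnj (v$i)" for i
    using assms by (simp add: eigenspace_c_def)
  then show ?thesis
    by (simp add: eigenspace_c_def vec_eq_iff cmat_def matrix_vector_mult_def)
qed

lemma Re_cform_cnj_pos:
  fixes b :: "real^'n \<Rightarrow> real^'n \<Rightarrow> real"
  assumes "bilinear b" "\<And>u. u \<noteq> 0 \<Longrightarrow> b u u > 0" "v \<noteq> 0"
  shows "Re (cform b v (\<chi> i. cnj (v$i))) > 0"
proof -
  define a where "a = (\<chi> i. Re (v$i))"
  define c where "c = (\<chi> i. Im (v$i))"
  have nonneg: "b u u \<ge> 0" for u
    using assms(2)[of u] bilinear_lzero[OF assms(1)] by (cases "u = 0") auto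
  have "a \<noteq> 0 \<or> c \<noteq> 0"
    using assms(3) by (auto simp: a_def c_def vec_eq_iff complex_eq_iff)
  then have "b a a + b c c > 0"
    using nonneg assms(2) by (meson add_pos_nonneg add_nonneg_pos)
  moreover have "b a a + b c c =
      (\<Sum>i\<in>UNIV. \<Sum>j\<in>UNIV. (a$i * a$j + c$i * c$j) * b (axis i 1) (axis j 1))"
    by (simp add: bilinear_vec_expand[OF assms(1), of a a] bilinear_vec_expand[OF assms(1), of c c]
        algebra_simps sum.distrib)
  then have "Re (cform b v (\<chi> i. cnj (v$i))) = b a a + b c c"
    by (simp add: cform_def a_def c_def Re_sum)
  ultimately show ?thesis by simp
qed

lemma isometry_eigenvalue_unimodular:
  fixes b :: "real^'n \<Rightarrow> real^'n \<Rightarrow> real"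
  assumes "bilinear b" "\<And>u. u \<noteq> 0 \<Longrightarrow> b u u > 0" "\<And>u w. b (A *v u) (A *v w) = b u w"
    and "v \<noteq> 0" "v \<in> eigenspace_c A l"
  shows "l * cnj l = 1"
proof -
  have "l * cnj l * cform b v (\<chi> i. cnj (v$i)) = cform b v (\<chi> i. cnj (v$i))"
    using cform_eigenvectors_isometry[OF assms(1,3,5) eigenspace_c_cnj[OF assms(5)]] .
  moreover have "cform b v (\<chi> i. cnj (v$i)) \<noteq> 0"
    using Re_cform_cnj_pos[OF assms(1,2,4)] by auto
  ultimately show ?thesis by simp
qed

lemma cform_eigenspaces_isometry:
  fixes b :: "real^'n \<Rightarrow> real^'n \<Rightarrow> real"
  assumes "bilinear b" "\<And>u. u \<noteq> 0 \<Longrightarrow> b u u > 0" "\<And>u w. b (A *v u) (A *v w) = b u w"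
    and "\<exists>v. v \<noteq> 0 \<and> v \<in> eigenspace_c A l"
    and "v \<in> eigenspace_c A l" "w \<in> eigenspace_c A m" "cform b v w \<noteq> 0"
  shows "m = cnj l \<and> m = 1 / l"
proof -
  have lm: "l * m = 1"
    using cform_eigenvectors_isometry[OF assms(1,3,5,6)] assms(7) by simp
  moreover have "l * cnj l = 1"
    using assms(4) isometry_eigenvalue_unimodular[OF assms(1-3)] by blast
  ultimately have "m = cnj l"
    by (metis mult.left_commute mult.right_neutral mult.commute)
  then show ?thesis using lm by (simp add: eq_divide_eq mult.commute)
qed

lemma orthogonal_projection_exists:
  fixes P :: "(real^'m) set"
  assumes "subspace P"
  obtains p where "p \<in> P" "\<forall>s\<in>P. (w - p) \<bullet> s = 0"
proof -
  obtain y z where "y \<in> span P" "\<And>s. s \<in> span P \<Longrightarrow> orthogonal z s" "w = y + z"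
    using orthogonal_subspace_decomp_exists[of P w] by metis
  moreover have "span P = P" using assms by (simp add: span_eq_iff)
  ultimately show ?thesis using that[of y] by (auto simp: orthogonal_def)
qed

lemma orthogonal_projection_unique:
  fixes P :: "'a::real_inner set"
  assumes "subspace P" "p \<in> P" "\<forall>s\<in>P. (w - p) \<bullet> s = 0" "q \<in> P" "\<forall>s\<in>P. (w - q) \<bullet> s = 0"
  shows "p = q"
proof -
  have "p - q \<in> P" using assms by (simp add: subspace_diff)
  then have "(w - q) \<bullet> (p - q) - (w - p) \<bullet> (p - q) = 0" using assms by simp
  moreover have "(p - q) \<bullet> (p - q) = (w - q) \<bullet> (p - q) - (w - p) \<bullet> (p - q)"
    by (simp add: algebra_simps)
  ultimately show ?thesis by simp
qed

lemma nproj_eq: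
  fixes P :: "(real^'m) set"
  assumes "subspace P" "p \<in> P" "\<forall>s\<in>P. (w - p) \<bullet> s = 0"
  shows "nproj P w = w - p"
proof -
  have "(THE p. p \<in> P \<and> (\<forall>s\<in>P. (w - p) \<bullet> s = 0)) = p"
    using assms orthogonal_projection_unique[OF assms(1)] by (intro the_equality) auto
  then show ?thesis by (simp add: nproj_def)
qed

lemma nproj_scale_add:
  fixes P :: "(real^'m) set"
  assumes "subspace P" "t \<in> P"
  shows "nproj P (c *\<^sub>R w + t) = c *\<^sub>R nproj P w"
proof -
  obtain p where p: "p \<in> P" "\<forall>s\<in>P. (w - p) \<bullet> s = 0"
    using orthogonal_projection_exists[OF assms(1)] by blast
  have "c *\<^sub>R p + t \<in> P" using p assms by (simp add: subspace_add subspace_scale)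
  moreover have "\<forall>s\<in>P. (c *\<^sub>R w + t - (c *\<^sub>R p + t)) \<bullet> s = 0"
    using p by (simp add: algebra_simps flip: scaleR_diff_right)
  ultimately have "nproj P (c *\<^sub>R w + t) = c *\<^sub>R w + t - (c *\<^sub>R p + t)"
    using nproj_eq[OF assms(1)] by blast
  also have "\<dots> = c *\<^sub>R nproj P w" using nproj_eq[OF assms(1) p] by (simp add: scaleR_diff_right)
  finally show ?thesis .
qed

lemma linear_nproj:
  fixes P :: "(real^'m) set"
  assumes "subspace P"
  shows "linear (nproj P)"
proof (rule linearI)
  fix x y :: "real^'m"
  obtain p where p: "p \<in> P" "\<forall>s\<in>P. (x - p) \<bullet> s = 0"
    using orthogonal_projection_exists[OF assms] by blast
  obtain q where q: "q \<in> P" "\<forall>s\<in>P. (y - q) \<bullet> s = 0"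
    using orthogonal_projection_exists[OF assms] by blast
  have "p + q \<in> P" using p q assms by (simp add: subspace_add)
  moreover have "\<forall>s\<in>P. (x + y - (p + q)) \<bullet> s = 0"
    using p q by (simp add: algebra_simps inner_diff_left inner_add_left)
  ultimately have "nproj P (x + y) = x + y - (p + q)"
    using nproj_eq[OF assms] by blast
  then show "nproj P (x + y) = nproj P x + nproj P y"
    using nproj_eq[OF assms p] nproj_eq[OF assms q] by (simp add: add_diff_add)
next
  fix c :: real and x :: "real^'m"
  show "nproj P (c *\<^sub>R x) = c *\<^sub>R nproj P x"
    using nproj_scale_add[OF assms subspace_0[OF assms], of c x] by simp
qed

lemma has_real_derivative_along_line:
  fixes g :: "'a::real_normed_vector \<Rightarrow> real"
  assumes "(g has_derivative G) (at (a + s *\<^sub>R u))"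
  shows "((\<lambda>s. g (a + s *\<^sub>R u)) has_real_derivative G u) (at s)"
proof -
  have "((\<lambda>s. a + s *\<^sub>R u) has_derivative (\<lambda>h. h *\<^sub>R u)) (at s)"
    by (auto intro!: derivative_eq_intros)
  from has_derivative_compose[OF this assms]
  have "((\<lambda>s. g (a + s *\<^sub>R u)) has_derivative (\<lambda>h. G (h *\<^sub>R u))) (at s)" .
  moreover have "(\<lambda>h. G (h *\<^sub>R u)) = (*) (G u)"
    using linear_scale[OF has_derivative_linear[OF assms]] by (auto simp: fun_eq_iff mult.commute)
  ultimately show ?thesis by (simp add: has_field_derivative_def)
qed

lemma second_difference_mvt:
  fixes g :: "'a::real_normed_vector \<Rightarrow> real"
  assumes ball: "ball x r \<subseteq> S"
    and der: "\<And>y. y \<in> S \<Longrightarrow> (g has_derivative G y) (at y)"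
    and t: "t > 0" "t * (norm u + norm v) < r"
  obtains z where "0 < z" "z < t"
    "g (x + t *\<^sub>R u + t *\<^sub>R v) - g (x + t *\<^sub>R v) - g (x + t *\<^sub>R u) + g x
       = t * (G (x + t *\<^sub>R v + z *\<^sub>R u) u - G (x + z *\<^sub>R u) u)"
proof -
  have in_S: "x + t *\<^sub>R v + s *\<^sub>R u \<in> S" "x + s *\<^sub>R u \<in> S" if "0 \<le> s" "s \<le> t" for s
  proof -
    have "norm (t *\<^sub>R v + s *\<^sub>R u) \<le> t * norm v + s * norm u"
      using norm_triangle_ineq[of "t *\<^sub>R v" "s *\<^sub>R u"] that t by simp
    also have "\<dots> \<le> t * (norm u + norm v)"
      using that by (simp add: algebra_simps mult_right_mono)
    finally have "dist x (x + (t *\<^sub>R v + s *\<^sub>R u)) < r"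
      using t by (simp add: dist_norm norm_minus_commute add.commute)
    then show "x + t *\<^sub>R v + s *\<^sub>R u \<in> S" using ball by (auto simp: add.assoc)
    have "norm (s *\<^sub>R u) \<le> t * (norm u + norm v)"
      using that t by (simp add: mult_mono add_increasing2)
    then show "x + s *\<^sub>R u \<in> S" using ball t by (auto simp: dist_norm)
  qed
  define \<psi> where "\<psi> s = g (x + t *\<^sub>R v + s *\<^sub>R u) - g (x + s *\<^sub>R u)" for s
  have "\<exists>z>0. z < t \<and> \<psi> t - \<psi> 0 = (t - 0) * (G (x + t *\<^sub>R v + z *\<^sub>R u) u - G (x + z *\<^sub>R u) u)"
  proof (rule MVT2)
    fix s :: real assume "0 \<le> s" "s \<le> t"
    with in_S show "(\<psi> has_real_derivative G (x + t *\<^sub>R v + s *\<^sub>R u) u - G (x + s *\<^sub>R u) u) (at s)"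
      unfolding \<psi>_def by (intro DERIV_diff has_real_derivative_along_line der)
  qed (use t in auto)
  then show ?thesis using that by (auto simp: \<psi>_def algebra_simps)
qed

lemma second_difference_estimate:
  fixes g :: "'a::real_normed_vector \<Rightarrow> real"
  assumes ball: "ball x r \<subseteq> S"
    and der: "\<And>y. y \<in> S \<Longrightarrow> (g has_derivative G y) (at y)"
    and lin: "linear Lu"
    and approx: "\<forall>y. norm (y - x) < d \<longrightarrow> \<bar>G y u - G x u - Lu (y - x)\<bar> \<le> e * norm (y - x)"
    and t: "t > 0" "t * (norm u + norm v) < d" "t * (norm u + norm v) < r" and e: "e \<ge> 0"
  shows "\<bar>g (x + t *\<^sub>R u + t *\<^sub>R v) - g (x + t *\<^sub>R v) - g (x + t *\<^sub>R u) + g x - t * t * Lu v\<bar>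
          \<le> e * t * t * (2 * norm u + norm v)"
proof -
  obtain z where z: "0 < z" "z < t" and mvt:
    "g (x + t *\<^sub>R u + t *\<^sub>R v) - g (x + t *\<^sub>R v) - g (x + t *\<^sub>R u) + g x
       = t * (G (x + t *\<^sub>R v + z *\<^sub>R u) u - G (x + z *\<^sub>R u) u)"
    using second_difference_mvt[OF ball der t(1,3)] by blast
  define p where "p = t *\<^sub>R v + z *\<^sub>R u"
  define q where "q = z *\<^sub>R u"
  have zt: "z * norm u \<le> t * norm u" using z by (simp add: mult_right_mono)
  have np: "norm p \<le> t * (norm u + norm v)"
    using norm_triangle_ineq[of "t *\<^sub>R v" "z *\<^sub>R u"] z t zt by (simp add: p_def algebra_simps)
  have nq: "norm q \<le> t * norm u" using z zt by (simp add: q_def)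
  have approx_at: "\<bar>G (x + w) u - G x u - Lu w\<bar> \<le> e * norm w" if "norm w < d" for w
    using approx that by (metis add_diff_cancel_left')
  have "t * norm u \<le> t * (norm u + norm v)" using t(1) by simp
  then have ep: "\<bar>G (x + p) u - G x u - Lu p\<bar> \<le> e * norm p"
    and eq: "\<bar>G (x + q) u - G x u - Lu q\<bar> \<le> e * norm q"
    using np nq t(2) by (auto intro!: approx_at)
  have "Lu p - Lu q = t * Lu v"
    by (simp add: p_def q_def linear_add[OF lin] linear_scale[OF lin])
  then have "G (x + p) u - G (x + q) u - t * Lu v
      = (G (x + p) u - G x u - Lu p) - (G (x + q) u - G x u - Lu q)"
    by simp
  then have "\<bar>G (x + p) u - G (x + q) u - t * Lu v\<bar> \<le> e * (norm p + norm q)"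
    using ep eq by (simp add: distrib_left)
  also have "\<dots> \<le> e * (t * (2 * norm u + norm v))"
    using np nq e by (intro mult_left_mono) (auto simp: algebra_simps)
  finally have "t * \<bar>G (x + p) u - G (x + q) u - t * Lu v\<bar> \<le> t * (e * (t * (2 * norm u + norm v)))"
    using t(1) by (simp add: mult_left_mono)
  moreover have "g (x + t *\<^sub>R u + t *\<^sub>R v) - g (x + t *\<^sub>R v) - g (x + t *\<^sub>R u) + g x - t * t * Lu v
      = t * (G (x + p) u - G (x + q) u - t * Lu v)"
    using mvt by (simp add: p_def q_def add.assoc right_diff_distrib)
  ultimately show ?thesis using t(1) by (simp add: abs_mult mult_ac)
qed

lemma mixed_derivatives_symmetric:
  fixes g :: "'a::real_normed_vector \<Rightarrow> real"
  assumes S: "open S" "x \<in> S" and der: "\<And>y. y \<in> S \<Longrightarrow> (g has_derivative G y) (at y)"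
    and du: "((\<lambda>y. G y u) has_derivative Lu) (at x)" and dv: "((\<lambda>y. G y v) has_derivative Lv) (at x)"
  shows "Lu v = Lv u"
proof -
  define C where "C = 3 * norm u + 3 * norm v"
  have bound: "\<bar>Lu v - Lv u\<bar> \<le> e * C" if e: "e > 0" for e
  proof -
    obtain r where r: "r > 0" "ball x r \<subseteq> S" using S by (meson openE)
    obtain d1 where d1: "d1 > 0"
      "\<forall>y. norm (y - x) < d1 \<longrightarrow> norm (G y u - G x u - Lu (y - x)) \<le> e * norm (y - x)"
      using du e unfolding has_derivative_at_alt by blast
    obtain d2 where d2: "d2 > 0"
      "\<forall>y. norm (y - x) < d2 \<longrightarrow> norm (G y v - G x v - Lv (y - x)) \<le> e * norm (y - x)"
      using dv e unfolding has_derivative_at_alt by blast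
    define t where "t = min r (min d1 d2) / (norm u + norm v + 1)"
    have t: "t > 0" using r d1 d2 by (simp add: t_def add_nonneg_pos)
    have "t * (norm u + norm v) < t * (norm u + norm v + 1)" using t by simp
    also have "\<dots> = min r (min d1 d2)"
      using add_nonneg_pos[of "norm u + norm v" 1] by (simp add: t_def)
    finally have small: "t * (norm u + norm v) < min r (min d1 d2)" .
    \<comment> \<open>the same second difference \<open>?D\<close> is close to both \<open>t\<^sup>2 Lu v\<close> and \<open>t\<^sup>2 Lv u\<close>\<close>
    let ?D = "g (x + t *\<^sub>R u + t *\<^sub>R v) - g (x + t *\<^sub>R v) - g (x + t *\<^sub>R u) + g x"
    have "\<bar>?D - t * t * Lu v\<bar> \<le> e * t * t * (2 * norm u + norm v)"
      using small d1 e by (intro second_difference_estimate[OF r(2) der has_derivative_linear[OF du] _ t]) auto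
    moreover have "\<bar>g (x + t *\<^sub>R v + t *\<^sub>R u) - g (x + t *\<^sub>R u) - g (x + t *\<^sub>R v) + g x
        - t * t * Lv u\<bar> \<le> e * t * t * (2 * norm v + norm u)"
      using small d2 e by (intro second_difference_estimate[OF r(2) der has_derivative_linear[OF dv] _ t])
        (auto simp: add.commute)
    then have "\<bar>?D - t * t * Lv u\<bar> \<le> e * t * t * (2 * norm v + norm u)"
      by (simp add: add.commute add.left_commute)
    ultimately have "\<bar>(?D - t * t * Lv u) - (?D - t * t * Lu v)\<bar> \<le> t * t * (e * C)"
      using abs_triangle_ineq4[of "?D - t * t * Lv u" "?D - t * t * Lu v"]
      by (simp add: C_def algebra_simps)
    moreover have "(?D - t * t * Lv u) - (?D - t * t * Lu v) = t * t * (Lu v - Lv u)"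
      by (simp add: algebra_simps)
    ultimately have "t * t * \<bar>Lu v - Lv u\<bar> \<le> t * t * (e * C)"
      using t by (simp add: abs_mult)
    then show ?thesis using t by simp
  qed
  have "\<bar>Lu v - Lv u\<bar> \<le> 0"
  proof (rule field_le_epsilon)
    fix e :: real assume "e > 0"
    have C: "C \<ge> 0" by (simp add: C_def)
    then have "\<bar>Lu v - Lv u\<bar> \<le> e / (C + 1) * C" using \<open>e > 0\<close> by (intro bound) simp
    also have "\<dots> \<le> e" using C \<open>e > 0\<close> by (simp add: field_simps)
    finally show "\<bar>Lu v - Lv u\<bar> \<le> 0 + e" by simp
  qed
  then show ?thesis by simp
qed

lemma smooth_on_has_derivative:
  assumes "smooth_on U F" "y \<in> U"
  shows "(F has_derivative Dif F y) (at y)"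
  using assms iter_dd.simps(1)[of F] unfolding smooth_on_def
  by (metis frechet_derivative_works)

lemma smooth_on_has_derivative_Dif:
  fixes F :: "real^'n \<Rightarrow> real^'m"
  assumes "smooth_on U F" "y \<in> U"
  shows "((\<lambda>z. Dif F z w) has_derivative (\<lambda>h. D2 F y h w)) (at y)"
proof -
  have "iter_dd F [w] differentiable (at y)" using assms unfolding smooth_on_def by blast
  then show ?thesis unfolding D2_def by (simp add: frechet_derivative_works[symmetric])
qed

lemma D2_commute:
  fixes F :: "real^'n \<Rightarrow> real^'m"
  assumes "open U" "smooth_on U F" "y \<in> U"
  shows "D2 F y u v = D2 F y v u"
proof -
  have der: "((\<lambda>z. F z $ k) has_derivative (\<lambda>w. Dif F z w $ k)) (at z)" if "z \<in> U" for z k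
    using bounded_linear.has_derivative[OF bounded_linear_vec_nth smooth_on_has_derivative[OF assms(2) that]] .
  have der2: "((\<lambda>z. Dif F z w $ k) has_derivative (\<lambda>h. D2 F y h w $ k)) (at y)" for w k
    using bounded_linear.has_derivative[OF bounded_linear_vec_nth smooth_on_has_derivative_Dif[OF assms(2,3)]] .
  have "D2 F y u v $ k = D2 F y v u $ k" for k
    using mixed_derivatives_symmetric[OF assms(1,3) der der2 der2] .
  then show ?thesis by (simp add: vec_eq_iff)
qed

lemma linear_D2:
  fixes F :: "real^'n \<Rightarrow> real^'m"
  assumes "smooth_on U F" "y \<in> U"
  shows "linear (\<lambda>h. D2 F y h w)"
  using has_derivative_linear[OF smooth_on_has_derivative_Dif[OF assms]] .

lemma linear_D2_right:
  fixes F :: "real^'n \<Rightarrow> real^'m"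
  assumes "open U" "smooth_on U F" "y \<in> U"
  shows "linear (D2 F y h)"
  using linear_D2[OF assms(2,3)] D2_commute[OF assms] by (simp add: fun_eq_iff)

lemma bounded_linear_matrix_vector_nth: "bounded_linear (\<lambda>M::real^'n^'n. (M *v v) $ i)"
  by (auto intro!: linearI simp: linear_conv_bounded_linear[symmetric] matrix_vector_mult_def
      sum.distrib sum_distrib_left algebra_simps)

lemma D2_conformal_tangential:
  fixes f g :: "real^'n \<Rightarrow> real^'m" and T :: "real^'n \<Rightarrow> real^'n^'n"
  assumes U: "open U" and sf: "smooth_on U f" and sg: "smooth_on U g"
    and s\<phi>: "smooth_on U \<phi>" and sT: "smooth_on U T"
    and conf: "\<forall>y\<in>U. \<forall>v. Dif g y v = exp (\<phi> y) *\<^sub>R Dif f y (T y *v v)"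
    and x: "x \<in> U"
  shows "\<exists>t\<in>range (Dif f x). D2 g x h v = exp (\<phi> x) *\<^sub>R D2 f x h (T x *v v) + t"
proof -
  define a where "a i y = exp (\<phi> y) * (T y *v v) $ i" for i y
  have "\<exists>a'. (a i has_derivative a') (at x)" for i
    using has_derivative_mult[OF has_derivative_exp[OF smooth_on_has_derivative[OF s\<phi> x]]
        bounded_linear.has_derivative[OF bounded_linear_matrix_vector_nth smooth_on_has_derivative[OF sT x]]]
    unfolding a_def by blast
  then obtain a' where a': "\<And>i. (a i has_derivative a' i) (at x)" by metis
  have lin: "linear (Dif f y)" if "y \<in> U" for y
    using has_derivative_linear[OF smooth_on_has_derivative[OF sf that]] .
  have "Dif g y v = (\<Sum>i\<in>UNIV. a i y *\<^sub>R Dif f y (axis i 1))" if "y \<in> U" for y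
    using conf that linear_vec_expand[OF lin[OF that], of "T y *v v"]
    by (simp add: a_def scaleR_sum_right)
  moreover have "((\<lambda>y. \<Sum>i\<in>UNIV. a i y *\<^sub>R Dif f y (axis i 1)) has_derivative
      (\<lambda>h. \<Sum>i\<in>UNIV. a i x *\<^sub>R D2 f x h (axis i 1) + a' i h *\<^sub>R Dif f x (axis i 1))) (at x)"
    by (intro has_derivative_sum has_derivative_scaleR a' smooth_on_has_derivative_Dif[OF sf x])
  ultimately have "((\<lambda>y. Dif g y v) has_derivative
      (\<lambda>h. \<Sum>i\<in>UNIV. a i x *\<^sub>R D2 f x h (axis i 1) + a' i h *\<^sub>R Dif f x (axis i 1))) (at x)"
    using has_derivative_transform_within_open[OF _ U x] by (metis (no_types, lifting))
  then have "D2 g x h v = (\<Sum>i\<in>UNIV. a i x *\<^sub>R D2 f x h (axis i 1)) + Dif f x (\<Sum>i\<in>UNIV. a' i h *\<^sub>R axis i 1)"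
    using has_derivative_unique[OF smooth_on_has_derivative_Dif[OF sg x]]
    by (simp add: fun_eq_iff sum.distrib linear_sum[OF lin[OF x]] linear_scale[OF lin[OF x]])
  also have "(\<Sum>i\<in>UNIV. a i x *\<^sub>R D2 f x h (axis i 1)) = exp (\<phi> x) *\<^sub>R D2 f x h (T x *v v)"
    using linear_vec_expand[OF linear_D2_right[OF U sf x], of h "T x *v v"]
    by (simp add: a_def scaleR_sum_right)
  finally show ?thesis by blast
qed

lemma sff_conformal_symmetric:
  fixes f g :: "real^'n \<Rightarrow> real^'m" and T :: "real^'n \<Rightarrow> real^'n^'n"
  assumes U: "open U" and sf: "smooth_on U f" and sg: "smooth_on U g"
    and s\<phi>: "smooth_on U \<phi>" and sT: "smooth_on U T"
    and conf: "\<forall>y\<in>U. \<forall>v. Dif g y v = exp (\<phi> y) *\<^sub>R Dif f y (T y *v v)"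
    and x: "x \<in> U"
  shows "sff f x u (T x *v w) = sff f x (T x *v u) w"
proof -
  define P where "P = range (Dif f x)"
  have P: "subspace P"
    unfolding P_def using has_derivative_linear[OF smooth_on_has_derivative[OF sf x]]
    by (rule linear_subspace_image[OF _ subspace_UNIV])
  have normal_D2g: "nproj P (D2 g x h v) = exp (\<phi> x) *\<^sub>R sff f x h (T x *v v)" for h v
    using D2_conformal_tangential[OF U sf sg s\<phi> sT conf x, of h v] nproj_scale_add[OF P]
    unfolding sff_def P_def by auto
  have "exp (\<phi> x) *\<^sub>R sff f x u (T x *v w) = exp (\<phi> x) *\<^sub>R sff f x w (T x *v u)"
    using normal_D2g[of u w] normal_D2g[of w u] D2_commute[OF U sg x] by metis
  then show ?thesis unfolding sff_def using D2_commute[OF U sf x] by simp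
qed

lemma bilinear_metric:
  assumes "linear (Dif f x)"
  shows "bilinear (metric f x)"
  unfolding bilinear_def metric_def
  by (auto intro!: linearI simp: linear_add[OF assms] linear_scale[OF assms] inner_add_left inner_add_right)

lemma metric_pos:
  assumes "linear (Dif f x)" "inj (Dif f x)" "u \<noteq> 0"
  shows "metric f x u u > 0"
  using assms linear_0[OF assms(1)] by (simp add: metric_def inj_eq[symmetric, of _ u 0])

lemma bilinear_sff_nth:
  assumes "open U" "smooth_on U f" "x \<in> U"
  shows "bilinear (\<lambda>u v. sff f x u v $ k)"
proof -
  have "subspace (range (Dif f x))"
    using has_derivative_linear[OF smooth_on_has_derivative[OF assms(2,3)]]
    by (rule linear_subspace_image[OF _ subspace_UNIV])
  then have nproj_nth: "linear (\<lambda>z. nproj (range (Dif f x)) z $ k)"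
    using linear_compose[OF linear_nproj bounded_linear_vec_nth[THEN bounded_linear.linear]]
    by (simp add: o_def)
  show ?thesis
    using linear_compose[OF linear_D2[OF assms(2,3)] nproj_nth]
      linear_compose[OF linear_D2_right[OF assms] nproj_nth]
    by (simp add: bilinear_def sff_def o_def)
qed

lemma cmetric_eq_cform: "cmetric f x = cform (metric f x)"
  by (simp add: fun_eq_iff cmetric_def cform_def)

lemma csff_nth: "csff f x v w $ k = cform (\<lambda>u v. sff f x u v $ k) v w"
  by (simp add: csff_def cform_def)

theorem lemma3p2:
  fixes f g :: "real^'n \<Rightarrow> real^'m"
    and \<phi> :: "real^'n \<Rightarrow> real"
    and T :: "real^'n \<Rightarrow> real^'n^'n"
    and l m :: complex
    and U :: "(real^'n) set"
  assumes "immersion_on f U" and "immersion_on g U"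
    and "smooth_on U \<phi>" and "smooth_on U T"
    and "\<forall>x\<in>U. \<forall>u v. metric f x (T x *v u) (T x *v v) = metric f x u v"
    and "\<forall>x\<in>U. \<forall>v. Dif g x v = exp (\<phi> x) *\<^sub>R Dif f x (T x *v v)"
    and "x \<in> U"
    and "\<exists>v. v \<noteq> 0 \<and> v \<in> eigenspace_c (T x) l"
    and "\<exists>w. w \<noteq> 0 \<and> w \<in> eigenspace_c (T x) m"
  shows "(\<not> (m = cnj l \<and> m = 1 / l) \<longrightarrow>
           (\<forall>v\<in>eigenspace_c (T x) l. \<forall>w\<in>eigenspace_c (T x) m. cmetric f x v w = 0))
       \<and> (m \<noteq> l \<longrightarrow>
           (\<forall>v\<in>eigenspace_c (T x) l. \<forall>w\<in>eigenspace_c (T x) m. csff f x v w = 0))"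
proof -
  have U: "open U" and sf: "smooth_on U f" and sg: "smooth_on U g" and inj: "inj (Dif f x)"
    using assms(1,2,7) by (auto simp: immersion_on_def)
  have lin: "linear (Dif f x)"
    using has_derivative_linear[OF smooth_on_has_derivative[OF sf assms(7)]] .
  have "cmetric f x v w = 0"
    if "\<not> (m = cnj l \<and> m = 1 / l)" "v \<in> eigenspace_c (T x) l" "w \<in> eigenspace_c (T x) m" for v w
    using cform_eigenspaces_isometry[OF bilinear_metric[OF lin] metric_pos[OF lin inj] _ assms(8)]
      assms(5,7) that by (auto simp: cmetric_eq_cform)
  moreover have "csff f x v w = 0"
    if "m \<noteq> l" "v \<in> eigenspace_c (T x) l" "w \<in> eigenspace_c (T x) m" for v w
    using cform_eigenvectors_self_adjoint[OF bilinear_sff_nth[OF U sf assms(7)] _ that(2,3,1)]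
      sff_conformal_symmetric[OF U sf sg assms(3,4,6,7)]
    by (simp add: vec_eq_iff csff_nth)
  ultimately show ?thesis by blast
qed

end
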